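(* Let $A$ be a set, $\to$ a binary relation on $A$, $\vdash\!\dashv$ a symmetric relation on $A$ with $\sim=(\vdash\!\dashv)^*$, and $>$ a well-founded order on $A$ with $\sim\cdot>\cdot\sim\subseteq>$. If $(A,\to)$ is source decreasing modulo $\sim$ (with respect to $>$), then it is Church–Rosser modulo $\sim$, i.e. $(\leftarrow\cup\to\cup\sim)^*\subseteq\to^*\cdot\sim\cdot\leftarrow^*$.
   Context: Labeled steps: $b\to^{a} c$ means $b\to c$ and $b\sim a$; $b\vdash\!\dashv^{a}c$ means $b\vdash\!\dashv c$ and $b\sim a$; a step $c\leftarrow^a b$ means $b\to^a c$. For $a\in A$, $\Leftrightarrow_{\vee a}^*$ denotes the relation of pairs connected by a finite sequence of steps $\to^{a'}$, $\leftarrow^{a'}$, $\vdash\!\dashv^{a'}$, each with some label $a'<a$. $(A,\to)$ is source decreasing modulo $\sim$ if for all $a,b,c\in A$: (i) if $a\to b$ and $a\to c$ then $(b,c)\in\Leftrightarrow_{\vee a}^*$; (ii) if $a\to b$ and $a\vdash\!\dashv c$ then $(b,c)\in \Leftrightarrow_{\vee a}^*\cdot(\leftarrow^{a})^{=}$ (the last step being either empty or a step $d\leftarrow^a c$). *)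

theory Defs
  imports Main
begin

text \<open>Relations: R is the rewrite relation (b,c) \<in> R meaning b \<rightarrow> c;
  E is the symmetric relation (b,c) \<in> E meaning b \<turnstile>\<stileturn> c;
  sim = E^*; gt is the order, (a,b) \<in> gt meaning a > b.\<close>

definition lab_step :: "'a rel \<Rightarrow> 'a rel \<Rightarrow> 'a \<Rightarrow> 'a rel" where
  "lab_step R sim a = {(b,c). (b,c) \<in> R \<and> (b,a) \<in> sim}"

definition conv_below :: "'a rel \<Rightarrow> 'a rel \<Rightarrow> 'a rel \<Rightarrow> 'a rel \<Rightarrow> 'a \<Rightarrow> 'a rel" where
  "conv_below R E sim gt a =
     ({(b,c). \<exists>a'. (a,a') \<in> gt \<and>
        ((b,c) \<in> lab_step R sim a' \<or> (c,b) \<in> lab_step R sim a' \<or> (b,c) \<in> lab_step E sim a')})\<^sup>*"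

definition source_decreasing_mod :: "'a rel \<Rightarrow> 'a rel \<Rightarrow> 'a rel \<Rightarrow> 'a rel \<Rightarrow> bool" where
  "source_decreasing_mod R E sim gt \<longleftrightarrow>
     (\<forall>a b c. (a,b) \<in> R \<and> (a,c) \<in> R \<longrightarrow> (b,c) \<in> conv_below R E sim gt a) \<and>
     (\<forall>a b c. (a,b) \<in> R \<and> (a,c) \<in> E \<longrightarrow>
        (b,c) \<in> conv_below R E sim gt a O (Id \<union> (lab_step R sim a)\<inverse>))"

definition church_rosser_mod :: "'a rel \<Rightarrow> 'a rel \<Rightarrow> bool" where
  "church_rosser_mod R sim \<longleftrightarrow> (R\<inverse> \<union> R \<union> sim)\<^sup>* \<subseteq> R\<^sup>* O sim O (R\<inverse>)\<^sup>*"

end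

theory Submission
  imports Defs
begin

text \<open>Write \<open>J\<close> for \<open>\<rightarrow>\<^sup>* \<cdot> \<sim> \<cdot> \<leftarrow>\<^sup>*\<close>. By induction along a conversion it suffices that
  \<open>u J y\<close> together with \<open>u \<rightarrow> t\<close> or \<open>u \<turnstile>\<stileturn> t\<close> gives \<open>t J y\<close>. This is proved by well-founded
  induction on \<open>u\<close>: source decreasingness turns the peak or cliff formed by the given step and
  the first step of the valley from \<open>u\<close> into a conversion whose labels lie strictly below \<open>u\<close>,
  and the induction hypothesis transports \<open>J y\<close> along it. When the valley starts with \<open>\<sim>\<close>,
  its \<open>\<turnstile>\<stileturn>\<close>-steps are resolved one at a time in the same way. Labels only matter up to
  \<open>\<sim>\<close>, because \<open>\<sim> \<cdot> > \<cdot> \<sim> \<subseteq> >\<close>.\<close>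

definition join_mod :: "'a rel \<Rightarrow> 'a rel \<Rightarrow> 'a rel" where
  "join_mod R sim = R\<^sup>* O sim O (R\<inverse>)\<^sup>*"

lemma church_rosser_mod_iff: "church_rosser_mod R sim \<longleftrightarrow> (R\<inverse> \<union> R \<union> sim)\<^sup>* \<subseteq> join_mod R sim"
  unfolding church_rosser_mod_def join_mod_def ..

lemma join_mod_refl: "refl sim \<Longrightarrow> (a, a) \<in> join_mod R sim"
  unfolding join_mod_def by (blast dest: reflD)

lemma join_mod_sym:
  assumes "sym sim" and "(a, b) \<in> join_mod R sim"
  shows "(b, a) \<in> join_mod R sim"
proof -
  obtain p q where "(a, p) \<in> R\<^sup>*" "(p, q) \<in> sim" "(q, b) \<in> (R\<inverse>)\<^sup>*"
    using assms(2) unfolding join_mod_def by blast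
  then have "(b, q) \<in> R\<^sup>*" "(q, p) \<in> sim" "(p, a) \<in> (R\<inverse>)\<^sup>*"
    using \<open>sym sim\<close> by (simp_all add: rtrancl_converse symD)
  then show ?thesis unfolding join_mod_def by blast
qed

lemma join_mod_rtrancl_left:
  "(a, b) \<in> R\<^sup>* \<Longrightarrow> (b, c) \<in> join_mod R sim \<Longrightarrow> (a, c) \<in> join_mod R sim"
  unfolding join_mod_def by (blast intro: rtrancl_trans)

definition step_preserves_join :: "'a rel \<Rightarrow> 'a rel \<Rightarrow> 'a rel \<Rightarrow> 'a \<Rightarrow> bool" where
  "step_preserves_join R E sim u \<longleftrightarrow>
     (\<forall>t y. (u, t) \<in> R \<union> E \<longrightarrow> (u, y) \<in> join_mod R sim \<longrightarrow> (t, y) \<in> join_mod R sim)"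

lemma conversion_in_join_mod:
  assumes "sim = E\<^sup>*" and "sym E" and "\<And>u. step_preserves_join R E sim u"
  shows "(R\<inverse> \<union> R \<union> sim)\<^sup>* \<subseteq> join_mod R sim"
proof -
  have E_step: "(u, t) \<in> E \<Longrightarrow> (u, y) \<in> join_mod R sim \<Longrightarrow> (t, y) \<in> join_mod R sim" for u t y
    using assms(3) unfolding step_preserves_join_def by blast
  have E_steps: "(u, t) \<in> E\<^sup>* \<Longrightarrow> (u, y) \<in> join_mod R sim \<Longrightarrow> (t, y) \<in> join_mod R sim" for u t y
    by (induction rule: rtrancl_induct) (auto intro: E_step)
  have "(a, b) \<in> join_mod R sim" if "(a, b) \<in> (R\<inverse> \<union> R \<union> sim)\<^sup>*" for a b
    using that
  proof (induction rule: converse_rtrancl_induct)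
    case base
    show ?case by (simp add: join_mod_refl \<open>sim = E\<^sup>*\<close> refl_rtrancl)
  next
    case (step a a')
    have "(a', a) \<in> E\<^sup>*" if "(a, a') \<in> sim"
      using that \<open>sim = E\<^sup>*\<close> \<open>sym E\<close> by (metis sym_rtrancl symD)
    with step assms(3) show ?case
      unfolding step_preserves_join_def
      by (blast intro: E_steps join_mod_rtrancl_left)
  qed
  then show ?thesis by auto
qed

context
  fixes R E sim gt :: "'a rel"
  assumes sym_E: "sym E"
    and sim_def: "sim = E\<^sup>*"
    and sim_gt_sim: "sim O gt O sim \<subseteq> gt"
    and source_decr: "source_decreasing_mod R E sim gt"
begin

abbreviation J :: "'a rel" where
  "J \<equiv> join_mod R sim"

abbreviation preserved_below :: "'a \<Rightarrow> bool" where
  "preserved_below s \<equiv> \<forall>u. (s, u) \<in> gt \<longrightarrow> step_preserves_join R E sim u"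

lemma sym_sim: "sym sim"
  using sym_E sim_def by (simp add: sym_rtrancl)

lemma refl_sim: "refl sim"
  using sim_def by (simp add: refl_rtrancl)

lemma E_steps_sim: "(s, q) \<in> E\<^sup>* \<Longrightarrow> (q, s) \<in> sim"
  using sym_sim sim_def by (simp add: symD)

lemma gt_sim_left: "(s, s') \<in> sim \<Longrightarrow> (s', u) \<in> gt \<Longrightarrow> (s, u) \<in> gt"
  using sim_gt_sim refl_sim by (blast dest: reflD)

lemma gt_sim_right: "(a, a') \<in> gt \<Longrightarrow> (c, a') \<in> sim \<Longrightarrow> (a, c) \<in> gt"
  using sim_gt_sim refl_sim sym_sim by (blast dest: reflD symD)

lemma preserved_below_sim: "(s', s) \<in> sim \<Longrightarrow> preserved_below s \<Longrightarrow> preserved_below s'"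
  using gt_sim_left sym_sim by (blast dest: symD)

lemma preserved_below_step:
  "preserved_below s \<Longrightarrow> (s, u) \<in> gt \<Longrightarrow> (u, t) \<in> R \<union> E \<Longrightarrow> (u, y) \<in> J \<Longrightarrow> (t, y) \<in> J"
  unfolding step_preserves_join_def by blast

lemma conv_below_preserves_join:
  assumes "preserved_below a" and "(b, c) \<in> conv_below R E sim gt a" and "(b, y) \<in> J"
  shows "(c, y) \<in> J"
  using assms(2,3) unfolding conv_below_def
proof (induction rule: rtrancl_induct)
  case (step c d)
  then have cy: "(c, y) \<in> J" by simp
  from step.hyps(2) obtain a' where "(a, a') \<in> gt" and
    "(c, d) \<in> lab_step R sim a' \<or> (d, c) \<in> lab_step R sim a' \<or> (c, d) \<in> lab_step E sim a'"
    by blast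
  then consider "(c, d) \<in> R \<union> E" "(a, c) \<in> gt" | "(d, c) \<in> R"
    unfolding lab_step_def by (blast intro: gt_sim_right)
  then show ?case
    by cases (blast intro: preserved_below_step[OF assms(1)] cy
        join_mod_rtrancl_left[OF r_into_rtrancl])+
qed

lemma E_step_preserves_join:
  assumes "preserved_below s" and "(s, t) \<in> E" and "(s, y) \<in> J"
  shows "(t, y) \<in> J"
proof -
  obtain p q where sp: "(s, p) \<in> R\<^sup>*" and "(p, q) \<in> sim" and "(q, y) \<in> (R\<inverse>)\<^sup>*"
    using assms(3) unfolding join_mod_def by blast
  from sp show ?thesis
  proof (cases rule: converse_rtranclE)
    case base
    have "(t, s) \<in> sim"
      using assms(2) sym_E sim_def by (blast dest: symD)
    with base \<open>(p, q) \<in> sim\<close> \<open>(q, y) \<in> (R\<inverse>)\<^sup>*\<close> show ?thesis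
      unfolding join_mod_def sim_def by (blast intro: rtrancl_trans)
  next
    case (step s')
    obtain w where "(s', w) \<in> conv_below R E sim gt s" and "w = t \<or> (t, w) \<in> R"
      using source_decr step(1) assms(2)
      unfolding source_decreasing_mod_def lab_step_def by blast
    moreover have "(s', y) \<in> J"
      using step(2) \<open>(p, q) \<in> sim\<close> \<open>(q, y) \<in> (R\<inverse>)\<^sup>*\<close> unfolding join_mod_def by blast
    ultimately show ?thesis
      using conv_below_preserves_join[OF assms(1)]
      by (blast intro: join_mod_rtrancl_left[OF r_into_rtrancl])
  qed
qed

lemma E_steps_preserve_join:
  "(s, q) \<in> E\<^sup>* \<Longrightarrow> preserved_below s \<Longrightarrow> (s, y) \<in> J \<Longrightarrow> (q, y) \<in> J"
proof (induction rule: rtrancl_induct)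
  case (step b c)
  then show ?case
    using E_step_preserves_join preserved_below_sim E_steps_sim by blast
qed

lemma R_step_E_steps_join:
  "(s, q) \<in> E\<^sup>* \<Longrightarrow> preserved_below s \<Longrightarrow> (s, t) \<in> R \<Longrightarrow> (t, z) \<in> J \<Longrightarrow> (q, z) \<in> J"
proof (induction arbitrary: t rule: converse_rtrancl_induct)
  case base
  then show ?case by (blast intro: join_mod_rtrancl_left)
next
  case (step s e)
  obtain w where "(t, w) \<in> conv_below R E sim gt s" and "w = e \<or> (e, w) \<in> R"
    using source_decr step.prems(2) step.hyps(1)
    unfolding source_decreasing_mod_def lab_step_def by blast
  moreover from this(1) have "(w, z) \<in> J"
    by (rule conv_below_preserves_join[OF step.prems(1) _ step.prems(3)])
  moreover have "preserved_below e"
    using E_steps_sim[OF r_into_rtrancl[OF step.hyps(1)]] step.prems(1) by (rule preserved_below_sim)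
  ultimately show ?case
    using step.hyps(2) step.IH E_steps_preserve_join by metis
qed

lemma step_preserves_join_if_below:
  assumes "preserved_below s"
  shows "step_preserves_join R E sim s"
  unfolding step_preserves_join_def
proof (intro allI impI)
  fix t y
  assume st: "(s, t) \<in> R \<union> E" and sy: "(s, y) \<in> J"
  from sy obtain p q where sp: "(s, p) \<in> R\<^sup>*" and pq: "(p, q) \<in> sim" and qy: "(q, y) \<in> (R\<inverse>)\<^sup>*"
    unfolding join_mod_def by blast
  show "(t, y) \<in> J"
  proof (cases "(s, t) \<in> E")
    case True
    show ?thesis by (rule E_step_preserves_join[OF assms True sy])
  next
    case False
    with st have "(s, t) \<in> R" by blast
    from sp show ?thesis
    proof (cases rule: converse_rtranclE)
      case base
      have "(y, q) \<in> R\<^sup>*" using qy by (simp add: rtrancl_converse)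
      moreover have "(s, q) \<in> E\<^sup>*" using pq base sim_def by simp
      then have "(q, t) \<in> J"
        using assms \<open>(s, t) \<in> R\<close> join_mod_refl[OF refl_sim] by (rule R_step_E_steps_join)
      ultimately have "(y, t) \<in> J" by (rule join_mod_rtrancl_left)
      then show ?thesis by (rule join_mod_sym[OF sym_sim])
    next
      case (step s')
      have "(s', t) \<in> conv_below R E sim gt s"
        using source_decr step(1) \<open>(s, t) \<in> R\<close> unfolding source_decreasing_mod_def by blast
      moreover have "(s', y) \<in> J"
        using step(2) pq qy unfolding join_mod_def by blast
      ultimately show ?thesis by (rule conv_below_preserves_join[OF assms])
    qed
  qed
qed

lemma step_preserves_join_wf:
  assumes "wf (gt\<inverse>)"
  shows "step_preserves_join R E sim u"
  using assms
  by (induction u rule: wf_induct_rule) (simp add: step_preserves_join_if_below)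

end

theorem corollary3p9:
  fixes R E sim gt :: "'a rel"
  assumes "sym E"
    and "sim = E\<^sup>*"
    and "wf (gt\<inverse>)" and "irrefl gt" and "trans gt"
    and "sim O gt O sim \<subseteq> gt"
    and "source_decreasing_mod R E sim gt"
  shows "church_rosser_mod R sim"
  unfolding church_rosser_mod_iff
  using assms(2,1) by (rule conversion_in_join_mod)
    (rule step_preserves_join_wf[OF assms(1,2,6,7,3)])

end
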